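(* Let $r,t\ge 2$ be integers and let $n\ge rt$. Suppose that $G$ is an $n$-vertex complete multipartite graph satisfying $I(K_r(t),G)=I(K_r(t),n)$. Then $G\cong T_k(n)$ for some integer $k\ge r$. In particular, for every integer $n\ge rt$ there exists an integer $k$ such that $I(K_r(t),T_k(n))=I(K_r(t),n)$.
   Context: $K_r(t)$ denotes the complete $r$-partite graph with every part of size $t$. For graphs $F,G$, $I(F,G)$ is the number of subsets $S\subseteq V(G)$ with $|S|=v(F)$ such that $G[S]\cong F$, and $I(F,n)=\max\{I(F,G):v(G)=n\}$. The Turán graph $T_k(n)$ is the complete $k$-partite graph on $n$ vertices whose part sizes differ by at most one. *)

theory Defs
  imports Main
begin

definition simple_graph :: "'a set \<Rightarrow> ('a \<Rightarrow> 'a \<Rightarrow> bool) \<Rightarrow> bool" where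
  "simple_graph V E \<longleftrightarrow> finite V \<and> (\<forall>x y. E x y \<longrightarrow> x \<in> V \<and> y \<in> V)
     \<and> (\<forall>x y. E x y \<longrightarrow> E y x) \<and> (\<forall>x. \<not> E x x)"

definition graph_iso :: "'a set \<Rightarrow> ('a \<Rightarrow> 'a \<Rightarrow> bool) \<Rightarrow> 'b set \<Rightarrow> ('b \<Rightarrow> 'b \<Rightarrow> bool) \<Rightarrow> bool" where
  "graph_iso V E W F \<longleftrightarrow> (\<exists>f. bij_betw f V W \<and> (\<forall>x\<in>V. \<forall>y\<in>V. E x y \<longleftrightarrow> F (f x) (f y)))"

definition induced :: "('a \<Rightarrow> 'a \<Rightarrow> bool) \<Rightarrow> 'a set \<Rightarrow> 'a \<Rightarrow> 'a \<Rightarrow> bool" where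
  "induced E S = (\<lambda>x y. E x y \<and> x \<in> S \<and> y \<in> S)"

definition ind_count :: "'b set \<Rightarrow> ('b \<Rightarrow> 'b \<Rightarrow> bool) \<Rightarrow> 'a set \<Rightarrow> ('a \<Rightarrow> 'a \<Rightarrow> bool) \<Rightarrow> nat" where
  "ind_count VF EF V E = card {S. S \<subseteq> V \<and> card S = card VF \<and> graph_iso S (induced E S) VF EF}"

text \<open>I(F,n): maximum over all n-vertex graphs (up to isomorphism these are the
graphs on vertex set {0..<n}).\<close>
definition ind_max :: "'b set \<Rightarrow> ('b \<Rightarrow> 'b \<Rightarrow> bool) \<Rightarrow> nat \<Rightarrow> nat" where
  "ind_max VF EF n = Max {ind_count VF EF {0..<n} E | E. simple_graph {0..<n::nat} E}"

definition complete_multipartite :: "'a set \<Rightarrow> ('a \<Rightarrow> 'a \<Rightarrow> bool) \<Rightarrow> bool" where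
  "complete_multipartite V E \<longleftrightarrow> (\<exists>p :: 'a \<Rightarrow> nat. \<forall>x\<in>V. \<forall>y\<in>V. E x y \<longleftrightarrow> p x \<noteq> p y)"

definition Kpart_V :: "nat \<Rightarrow> nat \<Rightarrow> (nat \<times> nat) set" where
  "Kpart_V r t = {0..<r} \<times> {0..<t}"

definition Kpart_E :: "nat \<Rightarrow> nat \<Rightarrow> nat \<times> nat \<Rightarrow> nat \<times> nat \<Rightarrow> bool" where
  "Kpart_E r t = (\<lambda>u v. u \<in> Kpart_V r t \<and> v \<in> Kpart_V r t \<and> fst u \<noteq> fst v)"

text \<open>Turan graph T_k(n) on {0..<n}: parts are residue classes mod k (sizes differ by at most one).\<close>
definition turan_E :: "nat \<Rightarrow> nat \<Rightarrow> nat \<Rightarrow> nat \<Rightarrow> bool" where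
  "turan_E k n = (\<lambda>x y. x < n \<and> y < n \<and> x mod k \<noteq> y mod k)"

end

theory Submission
  imports Defs Complex_Main
begin

(* In a complete multipartite graph the copies of K_r(t) are exactly the unions of
   t-element subsets of r distinct classes, so I(K_r(t), G) only depends on the class sizes.
   Fix all classes but two, of sizes a >= b + 2 with a >= t, and let C, A, B count the copies of
   K_r(t), K_(r-1)(t), K_(r-2)(t) in the other classes; the count is then
   C + (C(a,t) + C(b,t)) A + C(a,t) C(b,t) B. If neither moving a vertex from the larger class to
   the smaller one nor the reverse move increases it, then with psi x = 1 / C(x, t-1) and d = a - b
     (d - 1) B <= t A (psi b - psi (a - 1))   and   t A (psi (b - 1) - psi a) <= (d + 1) B,
   which contradicts the strict convexity of the differences of psi. Hence the classes of an
   extremal complete multipartite graph differ in size by at most one: it is a Turan graph.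
   For the existence statement, Zykov symmetrisation turns any extremal graph into a complete
   multipartite extremal graph: non-adjacent vertices of K_r(t) are twins, so turning v into a
   clone of a non-neighbour u and turning u into a clone of v produce together at least twice
   as many copies as before, and an extremal graph therefore survives both clonings. *)

section \<open>Induced counts are invariant under isomorphism\<close>

lemma graph_iso_sym:
  assumes "graph_iso V E W F"
  shows "graph_iso W F V E"
proof -
  obtain f where f: "bij_betw f V W" and E: "\<forall>x\<in>V. \<forall>y\<in>V. E x y \<longleftrightarrow> F (f x) (f y)"
    using assms unfolding graph_iso_def by blast
  have "bij_betw (inv_into V f) W V"
    using f by (rule bij_betw_inv_into)
  moreover have "\<forall>x\<in>W. \<forall>y\<in>W. F x y \<longleftrightarrow> E (inv_into V f x) (inv_into V f y)"
    using E f by (simp add: bij_betw_def inv_into_into f_inv_into_f)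
  ultimately show ?thesis
    unfolding graph_iso_def by blast
qed

lemma graph_iso_trans:
  assumes "graph_iso U D V E" and "graph_iso V E W F"
  shows "graph_iso U D W F"
proof -
  obtain f where f: "bij_betw f U V" and D: "\<forall>x\<in>U. \<forall>y\<in>U. D x y \<longleftrightarrow> E (f x) (f y)"
    using assms(1) unfolding graph_iso_def by blast
  obtain g where g: "bij_betw g V W" and E: "\<forall>x\<in>V. \<forall>y\<in>V. E x y \<longleftrightarrow> F (g x) (g y)"
    using assms(2) unfolding graph_iso_def by blast
  have "bij_betw (g \<circ> f) U W"
    using f g by (rule bij_betw_trans)
  moreover have "\<forall>x\<in>U. \<forall>y\<in>U. D x y \<longleftrightarrow> F ((g \<circ> f) x) ((g \<circ> f) y)"
    using D E f by (auto simp: bij_betw_def)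
  ultimately show ?thesis
    unfolding graph_iso_def by blast
qed

lemma graph_iso_card: "graph_iso V E W F \<Longrightarrow> card V = card W"
  unfolding graph_iso_def by (blast intro: bij_betw_same_card)

lemma graph_iso_induced_image:
  assumes "inj_on g S" and "\<forall>x\<in>S. \<forall>y\<in>S. E x y \<longleftrightarrow> F (g x) (g y)"
  shows "graph_iso S (induced E S) (g ` S) (induced F (g ` S))"
  using assms unfolding graph_iso_def induced_def bij_betw_def by blast

lemma card_subsets_bij:
  assumes "bij_betw g V W" and "\<And>S. S \<subseteq> V \<Longrightarrow> P S \<longleftrightarrow> Q (g ` S)"
  shows "card {S. S \<subseteq> V \<and> P S} = card {T. T \<subseteq> W \<and> Q T}"
proof -
  have Pow: "bij_betw (image g) (Pow V) (Pow W)"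
    using assms(1) by (rule bij_betw_image_Pow)
  then have "inj_on (image g) {S. S \<subseteq> V \<and> P S}"
    by (rule inj_on_subset[OF bij_betw_imp_inj_on]) auto
  moreover have "image g ` {S. S \<subseteq> V \<and> P S} = {T. T \<subseteq> W \<and> Q T}"
  proof (intro equalityI subsetI)
    fix T assume "T \<in> {T. T \<subseteq> W \<and> Q T}"
    moreover have "T \<in> image g ` Pow V"
      using Pow calculation by (simp add: bij_betw_def)
    ultimately obtain S where "S \<subseteq> V" "T = g ` S" "Q T"
      by auto
    then show "T \<in> image g ` {S. S \<subseteq> V \<and> P S}"
      using assms(2) by blast
  qed (use assms Pow in \<open>auto simp: bij_betw_def\<close>)
  ultimately show ?thesis
    using card_image by fastforce
qed

lemma ind_count_graph_iso:
  assumes "graph_iso V E W F"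
  shows "ind_count VF EF V E = ind_count VF EF W F"
proof -
  obtain g where g: "bij_betw g V W" and E: "\<forall>x\<in>V. \<forall>y\<in>V. E x y \<longleftrightarrow> F (g x) (g y)"
    using assms unfolding graph_iso_def by blast
  have "card S = card VF \<and> graph_iso S (induced E S) VF EF
    \<longleftrightarrow> card (g ` S) = card VF \<and> graph_iso (g ` S) (induced F (g ` S)) VF EF"
    if "S \<subseteq> V" for S
  proof -
    have inj: "inj_on g S"
      using g that by (meson bij_betw_def inj_on_subset)
    have "graph_iso S (induced E S) (g ` S) (induced F (g ` S))"
      using graph_iso_induced_image[OF inj] E that by blast
    then show ?thesis
      using card_image[OF inj] graph_iso_trans graph_iso_sym by metis
  qed
  then show ?thesis
    unfolding ind_count_def by (rule card_subsets_bij[OF g])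
qed

lemma finite_ind_count_values:
  "finite {ind_count VF EF {0..<n} E | E. simple_graph {0..<n::nat} E}"
proof -
  have "ind_count VF EF {0..<n} E \<le> card (Pow {0..<n})" for E
    unfolding ind_count_def by (rule card_mono) auto
  then show ?thesis
    by (auto intro: finite_subset[of _ "{..card (Pow {0..<n::nat})}"])
qed

lemma ind_max_attained:
  "\<exists>E. simple_graph {0..<n::nat} E \<and> ind_count VF EF {0..<n} E = ind_max VF EF n"
proof -
  have "simple_graph {0..<n} (\<lambda>_ _. False)"
    unfolding simple_graph_def by simp
  then have "{ind_count VF EF {0..<n} E | E. simple_graph {0..<n::nat} E} \<noteq> {}"
    by blast
  from Max_in[OF finite_ind_count_values this] show ?thesis
    unfolding ind_max_def by auto
qed

lemma ind_count_le_ind_max: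
  assumes "simple_graph V E" and "card V = n"
  shows "ind_count VF EF V E \<le> ind_max VF EF n"
proof -
  obtain g where g: "bij_betw g V {0..<n}"
    using assms finite_same_card_bij[of V "{0..<n}"] unfolding simple_graph_def by auto
  define E' where "E' = (\<lambda>x y. x < n \<and> y < n \<and> E (inv_into V g x) (inv_into V g y))"
  have "simple_graph {0..<n} E'"
    using assms(1) unfolding simple_graph_def E'_def by simp
  moreover have "graph_iso V E {0..<n} E'"
    unfolding graph_iso_def E'_def
    using g by (intro exI[of _ g]) (auto simp: bij_betw_def inv_into_f_f)
  ultimately have "ind_count VF EF V E \<in> {ind_count VF EF {0..<n} E | E. simple_graph {0..<n} E}"
    using ind_count_graph_iso by blast
  then show ?thesis
    unfolding ind_max_def by (rule Max_ge[OF finite_ind_count_values])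
qed

section \<open>Zykov symmetrisation\<close>

definition copies :: "'b set \<Rightarrow> ('b \<Rightarrow> 'b \<Rightarrow> bool) \<Rightarrow> 'a set \<Rightarrow> ('a \<Rightarrow> 'a \<Rightarrow> bool) \<Rightarrow> 'a set set" where
  "copies VF EF V E = {S. S \<subseteq> V \<and> card S = card VF \<and> graph_iso S (induced E S) VF EF}"

definition ind_maximal :: "'b set \<Rightarrow> ('b \<Rightarrow> 'b \<Rightarrow> bool) \<Rightarrow> 'a set \<Rightarrow> ('a \<Rightarrow> 'a \<Rightarrow> bool) \<Rightarrow> bool" where
  "ind_maximal VF EF V E \<longleftrightarrow> simple_graph V E
     \<and> (\<forall>E'. simple_graph V E' \<longrightarrow> ind_count VF EF V E' \<le> ind_count VF EF V E)"

definition clone :: "('a \<Rightarrow> 'a \<Rightarrow> bool) \<Rightarrow> 'a \<Rightarrow> 'a set \<Rightarrow> 'a \<Rightarrow> 'a \<Rightarrow> bool" where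
  "clone E u A = (\<lambda>x y. E (if x \<in> A then u else x) (if y \<in> A then u else y))"

lemma ind_maximal_iff_ind_max:
  "ind_maximal VF EF {0..<n} E \<longleftrightarrow> simple_graph {0..<n} E \<and> ind_count VF EF {0..<n} E = ind_max VF EF n"
proof -
  obtain E0 where "simple_graph {0..<n} E0" "ind_count VF EF {0..<n} E0 = ind_max VF EF n"
    using ind_max_attained by blast
  then show ?thesis
    unfolding ind_maximal_def using ind_count_le_ind_max[of "{0..<n}"] by (metis card_atLeastLessThan diff_zero le_antisym)
qed

lemma finite_copies: "finite V \<Longrightarrow> finite (copies VF EF V E)"
  unfolding copies_def by (auto intro: finite_subset[of _ "Pow V"])

lemma ind_count_eq_card_copies: "ind_count VF EF V E = card (copies VF EF V E)"
  unfolding ind_count_def copies_def ..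

lemma card_filter_split:
  assumes "finite A"
  shows "card A = card {x\<in>A. P x} + card {x\<in>A. \<not> P x}"
  using card_Int_Diff[OF assms, of "Collect P"] by (simp add: Int_def set_diff_eq)

lemma card_split_two_points:
  assumes "finite X"
  shows "card X = card {S\<in>X. v \<notin> S} + card {S\<in>X. v \<in> S \<and> u \<notin> S} + card {S\<in>X. u \<in> S \<and> v \<in> S}"
  using card_filter_split[OF assms, of "\<lambda>S. v \<notin> S"]
    card_filter_split[of "{S\<in>X. v \<in> S}" "\<lambda>S. u \<notin> S"] assms
  by (simp add: conj_ac)

lemma complete_multipartite_graph_iso:
  assumes "graph_iso V E W F" and "complete_multipartite W F"
  shows "complete_multipartite V E"
proof -
  obtain f where f: "bij_betw f V W" and E: "\<forall>x\<in>V. \<forall>y\<in>V. E x y \<longleftrightarrow> F (f x) (f y)"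
    using assms(1) unfolding graph_iso_def by blast
  obtain q :: "_ \<Rightarrow> nat" where "\<forall>x\<in>W. \<forall>y\<in>W. F x y \<longleftrightarrow> q x \<noteq> q y"
    using assms(2) unfolding complete_multipartite_def by blast
  then have "\<forall>x\<in>V. \<forall>y\<in>V. E x y \<longleftrightarrow> (q \<circ> f) x \<noteq> (q \<circ> f) y"
    using E f by (auto dest: bij_betwE)
  then show ?thesis
    unfolding complete_multipartite_def by blast
qed

lemma simple_graph_clone:
  assumes "simple_graph V E" and "u \<in> V" and "A \<subseteq> V"
  shows "simple_graph V (clone E u A)"
  using assms unfolding simple_graph_def clone_def by (smt (verit) subsetD)

lemma clone_insert:
  assumes "u \<notin> A" and "a \<notin> A"
  shows "clone (clone E u A) u {a} = clone E u (insert a A)"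
  using assms unfolding clone_def by (intro ext) auto

lemma copies_clone_avoiding:
  assumes "v \<notin> S"
  shows "S \<in> copies VF EF V (clone E u {v}) \<longleftrightarrow> S \<in> copies VF EF V E"
proof -
  have "induced (clone E u {v}) S = induced E S"
    using assms unfolding induced_def clone_def by (intro ext) auto
  then show ?thesis
    unfolding copies_def by simp
qed

text \<open>A copy of a complete multipartite graph is complete multipartite, so non-adjacent u, v
  in it are twins and turning v into a clone of u leaves it a copy.\<close>
lemma copies_clone_containing_both:
  assumes F: "complete_multipartite VF EF" and S: "S \<in> copies VF EF V E"
    and uv: "u \<in> S" "v \<in> S" "\<not> E u v"
  shows "S \<in> copies VF EF V (clone E u {v})"
proof -
  obtain p :: "_ \<Rightarrow> nat" where p: "\<forall>x\<in>S. \<forall>y\<in>S. induced E S x y \<longleftrightarrow> p x \<noteq> p y"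
    using complete_multipartite_graph_iso[OF _ F] S unfolding copies_def complete_multipartite_def by blast
  let ?\<tau> = "\<lambda>x. if x \<in> {v} then u else x"
  have pE: "\<forall>x\<in>S. \<forall>y\<in>S. E x y \<longleftrightarrow> p x \<noteq> p y"
    using p by (simp add: induced_def)
  then have "p u = p v"
    using uv by blast
  then have \<tau>: "?\<tau> x \<in> S \<and> p (?\<tau> x) = p x" if "x \<in> S" for x
    using uv that by auto
  have "induced (clone E u {v}) S x y = induced E S x y" for x y
  proof (cases "x \<in> S \<and> y \<in> S")
    case True
    then have "?\<tau> x \<in> S" "?\<tau> y \<in> S" "p (?\<tau> x) = p x" "p (?\<tau> y) = p y"
      using \<tau> by auto
    then have "E (?\<tau> x) (?\<tau> y) \<longleftrightarrow> E x y"
      using True by (simp add: pE[rule_format])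
    then show ?thesis
      by (simp add: induced_def clone_def)
  qed (auto simp: induced_def)
  then have "induced (clone E u {v}) S = induced E S"
    by blast
  then show ?thesis
    using S unfolding copies_def by simp
qed

lemma card_copies_clone_swap:
  assumes "u \<in> V" and "v \<in> V" and "u \<noteq> v"
  shows "card {S\<in>copies VF EF V (clone E u {v}). v \<in> S \<and> u \<notin> S}
       = card {S\<in>copies VF EF V E. u \<in> S \<and> v \<notin> S}"
proof -
  define \<sigma> where "\<sigma> = id(u := v, v := u)"
  have bij: "bij_betw \<sigma> V V"
    using assms unfolding \<sigma>_def by (intro bij_betw_imageI) (auto simp: inj_on_def image_def)
  have "S \<in> copies VF EF V (clone E u {v}) \<and> v \<in> S \<and> u \<notin> S
    \<longleftrightarrow> \<sigma> ` S \<in> copies VF EF V E \<and> u \<in> \<sigma> ` S \<and> v \<notin> \<sigma> ` S" if "S \<subseteq> V" for S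
  proof (cases "v \<in> S \<and> u \<notin> S")
    case True
    have inj: "inj_on \<sigma> S"
      using bij that by (meson bij_betw_def inj_on_subset)
    have "graph_iso S (induced (clone E u {v}) S) (\<sigma> ` S) (induced E (\<sigma> ` S))"
      using True by (intro graph_iso_induced_image[OF inj]) (auto simp: clone_def \<sigma>_def)
    then have "graph_iso S (induced (clone E u {v}) S) VF EF
        \<longleftrightarrow> graph_iso (\<sigma> ` S) (induced E (\<sigma> ` S)) VF EF"
      using graph_iso_trans graph_iso_sym by metis
    moreover have "\<sigma> ` S \<subseteq> V" "u \<in> \<sigma> ` S" "v \<notin> \<sigma> ` S"
      using bij that True assms(3) by (auto simp: bij_betw_def \<sigma>_def)
    ultimately show ?thesis
      using True that by (simp add: copies_def card_image[OF inj])
  next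
    case False
    then show ?thesis
      by (auto simp: \<sigma>_def)
  qed
  then have "card {S. S \<subseteq> V \<and> S \<in> copies VF EF V (clone E u {v}) \<and> v \<in> S \<and> u \<notin> S}
      = card {T. T \<subseteq> V \<and> T \<in> copies VF EF V E \<and> u \<in> T \<and> v \<notin> T}"
    by (rule card_subsets_bij[OF bij])
  then show ?thesis
    by (simp add: copies_def conj_ac)
qed

lemma ind_count_clone_lower:
  assumes V: "finite V" and F: "complete_multipartite VF EF"
    and uv: "u \<in> V" "v \<in> V" "u \<noteq> v" "\<not> E u v"
  defines "N \<equiv> \<lambda>P. card {S\<in>copies VF EF V E. P S}"
  shows "N (\<lambda>S. v \<notin> S) + N (\<lambda>S. u \<in> S \<and> v \<notin> S) + N (\<lambda>S. u \<in> S \<and> v \<in> S)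
    \<le> ind_count VF EF V (clone E u {v})"
proof -
  let ?C = "copies VF EF V (clone E u {v})"
  have fin: "finite ?C"
    using V by (rule finite_copies)
  have "N (\<lambda>S. u \<in> S \<and> v \<in> S) \<le> card {S\<in>?C. u \<in> S \<and> v \<in> S}"
    unfolding N_def using fin
    by (intro card_mono) (auto intro: copies_clone_containing_both[OF F] simp: uv(4))
  moreover have "N (\<lambda>S. v \<notin> S) = card {S\<in>?C. v \<notin> S}"
    unfolding N_def using copies_clone_avoiding by metis
  moreover have "ind_count VF EF V (clone E u {v})
      = card {S\<in>?C. v \<notin> S} + card {S\<in>?C. v \<in> S \<and> u \<notin> S} + card {S\<in>?C. u \<in> S \<and> v \<in> S}"
    unfolding ind_count_eq_card_copies by (rule card_split_two_points[OF fin])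
  ultimately show ?thesis
    using card_copies_clone_swap[OF uv(1-3), of VF EF E] unfolding N_def by linarith
qed

lemma ind_maximal_clone:
  assumes F: "complete_multipartite VF EF" and max: "ind_maximal VF EF V E"
    and uv: "u \<in> V" "v \<in> V" "u \<noteq> v" "\<not> E u v"
  shows "ind_maximal VF EF V (clone E u {v})"
proof -
  have sg: "simple_graph V E" and V: "finite V" and vu: "\<not> E v u"
    using max uv(4) unfolding ind_maximal_def simple_graph_def by blast+
  let ?N = "\<lambda>P. card {S\<in>copies VF EF V E. P S}"
  have fin: "finite (copies VF EF V E)"
    using V by (rule finite_copies)
  have "ind_count VF EF V E = ?N (\<lambda>S. v \<notin> S) + ?N (\<lambda>S. v \<in> S \<and> u \<notin> S) + ?N (\<lambda>S. u \<in> S \<and> v \<in> S)"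
    "ind_count VF EF V E = ?N (\<lambda>S. u \<notin> S) + ?N (\<lambda>S. u \<in> S \<and> v \<notin> S) + ?N (\<lambda>S. v \<in> S \<and> u \<in> S)"
    unfolding ind_count_eq_card_copies using card_split_two_points[OF fin] by blast+
  moreover have "ind_count VF EF V (clone E v {u}) \<le> ind_count VF EF V E"
    "ind_count VF EF V (clone E u {v}) \<le> ind_count VF EF V E"
    using max simple_graph_clone[OF sg] uv unfolding ind_maximal_def by auto
  ultimately have "ind_count VF EF V (clone E u {v}) = ind_count VF EF V E"
    using ind_count_clone_lower[where E = E, OF V F uv]
      ind_count_clone_lower[where E = E, OF V F uv(2,1) uv(3)[symmetric] vu] by linarith
  then show ?thesis
    using max simple_graph_clone[OF sg uv(1), of "{v}"] uv(2) unfolding ind_maximal_def by simp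
qed

lemma ind_maximal_clone_set:
  assumes F: "complete_multipartite VF EF" and A: "finite A"
    and max: "ind_maximal VF EF V E" and u: "u \<in> V" "A \<subseteq> V - {u}" "\<forall>a\<in>A. \<not> E u a"
  shows "ind_maximal VF EF V (clone E u A)"
  using A u(2,3)
proof (induction A rule: finite_induct)
  case empty
  then show ?case
    using max by (simp add: clone_def)
next
  case (insert a A)
  then have "\<not> clone E u A u a" "u \<notin> A" "a \<in> V" "u \<noteq> a"
    by (auto simp: clone_def)
  then have "ind_maximal VF EF V (clone (clone E u A) u {a})"
    using insert by (intro ind_maximal_clone[OF F _ u(1)]) auto
  then show ?case
    using clone_insert[of u A a E] \<open>u \<notin> A\<close> insert.hyps(2) by simp
qed

text \<open>The invariant of the symmetrisation: the vertices of D are split into classes by p and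
  are adjacent exactly to the vertices outside D and to those of other classes. Cloning a vertex
  u outside D onto all its non-neighbours adds them, together with u, as a new class.\<close>
lemma clone_non_neighbours_extends_partition:
  assumes sg: "simple_graph V E" and u: "u \<in> V - D" and c: "c \<notin> p ` D"
    and part: "\<forall>x\<in>D. \<forall>y\<in>V. E x y \<longleftrightarrow> (y \<in> D \<longrightarrow> p x \<noteq> p y)"
  defines "A \<equiv> {a\<in>V. a \<noteq> u \<and> \<not> E u a}"
  shows "\<forall>x\<in>D \<union> insert u A. \<forall>y\<in>V. clone E u A x y \<longleftrightarrow>
    (y \<in> D \<union> insert u A \<longrightarrow> (if x \<in> insert u A then c else p x) \<noteq> (if y \<in> insert u A then c else p y))"
proof -
  have irr: "\<not> E u u" and sym: "\<And>x y. E x y \<Longrightarrow> E y x"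
    using sg unfolding simple_graph_def by blast+
  have Du: "E x u \<and> E u x" if "x \<in> D" for x
    using part u that sym by blast
  then have "A \<inter> D = {}"
    unfolding A_def by blast
  moreover have "E u y" if "y \<in> V" "y \<notin> insert u A" for y
    using that unfolding A_def by blast
  moreover have "u \<notin> A"
    unfolding A_def by blast
  ultimately show ?thesis
    using part Du irr c u unfolding clone_def by (auto 0 3)
qed

lemma ind_maximal_complete_multipartite_exists:
  assumes F: "complete_multipartite VF EF" and max: "ind_maximal VF EF V E"
  shows "\<exists>E'. ind_maximal VF EF V E' \<and> complete_multipartite V E'"
proof -
  have "\<exists>E'. ind_maximal VF EF V E' \<and> complete_multipartite V E'"
    if "ind_maximal VF EF V E" "D \<subseteq> V" "\<forall>x\<in>D. \<forall>y\<in>V. E x y \<longleftrightarrow> (y \<in> D \<longrightarrow> p x \<noteq> p y)"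
    for E D and p :: "_ \<Rightarrow> nat"
    using that
  proof (induction "card (V - D)" arbitrary: E D p rule: less_induct)
    case less
    have sg: "simple_graph V E" and V: "finite V"
      using less.prems(1) unfolding ind_maximal_def simple_graph_def by blast+
    show ?case
    proof (cases "D = V")
      case True
      then show ?thesis
        using less.prems unfolding complete_multipartite_def by auto
    next
      case False
      then obtain u where u: "u \<in> V - D"
        using less.prems(2) by blast
      obtain c :: nat where c: "c \<notin> p ` D"
        using ex_new_if_finite[OF infinite_UNIV_nat] finite_subset[OF less.prems(2) V] by blast
      define A where "A = {a\<in>V. a \<noteq> u \<and> \<not> E u a}"
      have "card (V - (D \<union> insert u A)) < card (V - D)"
        using u V by (intro psubset_card_mono) auto
      moreover have "ind_maximal VF EF V (clone E u A)"
        using V u less.prems(1) unfolding A_def by (intro ind_maximal_clone_set[OF F]) auto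
      moreover have "D \<union> insert u A \<subseteq> V"
        using u less.prems(2) unfolding A_def by blast
      ultimately show ?thesis
        using clone_non_neighbours_extends_partition[OF sg u c less.prems(3), folded A_def]
        by (rule less.hyps)
    qed
  qed
  from this[of E "{}"] show ?thesis
    using max by simp
qed

section \<open>Convexity of reciprocal binomial coefficients\<close>

lemma strictly_convex_pair_less:
  fixes D :: "nat \<Rightarrow> real"
  assumes conv: "\<And>x. p \<le> x \<Longrightarrow> D (Suc x) - D x < D (Suc (Suc x)) - D (Suc x)"
    and "p \<le> b" and "0 < i" and "i \<le> n"
  shows "D (b + i) + D (b + n + 1 - i) < D b + D (b + n + 1)"
proof -
  define \<Delta> where "\<Delta> x = D (Suc x) - D x" for x
  have \<Delta>_less: "\<Delta> x < \<Delta> y" if "p \<le> x" "x < y" for x y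
  proof -
    have "\<Delta> (p + k) < \<Delta> (p + k')" if "k < k'" for k k'
      using lift_Suc_mono_less[of "\<lambda>k. \<Delta> (p + k)", OF _ that] conv unfolding \<Delta>_def by simp
    from this[of "x - p" "y - p"] show ?thesis
      using that by simp
  qed
  have "D (b + i) - D b = (\<Sum>j<i. \<Delta> (b + j))"
    using sum_lessThan_telescope[of "\<lambda>j. D (b + j)" i] unfolding \<Delta>_def by simp
  also have "\<dots> < (\<Sum>j<i. \<Delta> (b + n + 1 - i + j))"
    using assms(2-4) by (intro sum_strict_mono \<Delta>_less) auto
  also have "\<dots> = D (b + n + 1) - D (b + n + 1 - i)"
    using sum_lessThan_telescope[of "\<lambda>j. D (b + n + 1 - i + j)" i] assms(4)
    unfolding \<Delta>_def by (simp add: Suc_diff_le)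
  finally show ?thesis
    by simp
qed

lemma strictly_convex_interior_sum_less:
  fixes D :: "nat \<Rightarrow> real"
  assumes conv: "\<And>x. p \<le> x \<Longrightarrow> D (Suc x) - D x < D (Suc (Suc x)) - D (Suc x)"
    and "p \<le> b" and "0 < n"
  shows "2 * (\<Sum>i=1..n. D (b + i)) < real n * (D b + D (b + n + 1))"
proof -
  have "(\<Sum>i=1..n. D (b + i)) = (\<Sum>i=1..n. D (b + n + 1 - i))"
    by (subst sum.atLeastAtMost_rev) (simp add: algebra_simps)
  then have "2 * (\<Sum>i=1..n. D (b + i)) = (\<Sum>i=1..n. D (b + i) + D (b + n + 1 - i))"
    by (simp add: sum.distrib)
  also have "\<dots> < (\<Sum>i=1..n. D b + D (b + n + 1))"
    using strictly_convex_pair_less[where D = D and p = p, OF conv] assms by (intro sum_strict_mono) auto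
  finally show ?thesis
    by simp
qed

definition recip_binomial :: "nat \<Rightarrow> nat \<Rightarrow> real" where
  "recip_binomial k x = 1 / real (x choose k)"

lemma recip_binomial_pos: "k \<le> x \<Longrightarrow> 0 < recip_binomial k x"
  unfolding recip_binomial_def by simp

lemma recip_binomial_diff:
  assumes "k \<le> x"
  shows "recip_binomial k x - recip_binomial k (Suc x) = real k / real (Suc k) * recip_binomial (Suc k) (Suc x)"
proof -
  define C C1 C2 where "C = real (x choose k)" and "C1 = real (Suc x choose k)"
    and "C2 = real (Suc x choose Suc k)"
  have "(Suc x - k) * (Suc x choose k) = Suc x * (x choose k)"
    using binomial_absorb_comp[of "Suc x" k] by (simp only: diff_Suc_1)
  then have "real (Suc x - k) * C1 = real (Suc x) * C"
    unfolding C_def C1_def of_nat_mult[symmetric] by (rule arg_cong)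
  then have e1: "(real (Suc x) - real k) * C1 = real (Suc x) * C"
    using assms by (simp add: of_nat_diff)
  have e2: "real (Suc x) * C = C2 * (real k + 1)"
    using arg_cong[OF Suc_times_binomial_eq[of x k], of real]
    unfolding C_def C2_def of_nat_mult by (simp del: binomial_Suc_Suc)
  have pos: "0 < C" "0 < C1" "0 < C2"
    using assms unfolding C_def C1_def C2_def by (simp_all del: binomial_Suc_Suc)
  have "(C1 - C) * ((real k + 1) * C2) = real k * (C * C1)"
    using e1 e2 by algebra
  then have "(C1 - C) / (C * C1) = real k / ((real k + 1) * C2)"
    using pos by (simp add: frac_eq_eq)
  moreover have "1 / C - 1 / C1 = (C1 - C) / (C * C1)"
    using pos by (simp add: field_simps)
  ultimately have "1 / C - 1 / C1 = real k / (real k + 1) * (1 / C2)"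
    by simp
  then show ?thesis
    unfolding recip_binomial_def C_def C1_def C2_def by simp
qed

lemma recip_binomial_strict_decreasing:
  assumes "0 < k" and "k \<le> x"
  shows "recip_binomial k (Suc x) < recip_binomial k x"
proof -
  have "0 < real k / real (Suc k) * recip_binomial (Suc k) (Suc x)"
    using assms recip_binomial_pos[of "Suc k" "Suc x"] by simp
  then show ?thesis
    using recip_binomial_diff[OF assms(2)] by linarith
qed

text \<open>By \<open>recip_binomial_diff\<close>, D x = 1 / (x choose m) - 1 / (x + 1 choose m) is a positive
  multiple of 1 / (x + 1 choose m + 1); a second application shows that the differences of D
  increase, so D is strictly convex and \<open>strictly_convex_interior_sum_less\<close> applies.\<close>
lemma recip_binomial_convexity:
  assumes "0 < m" and "m < b" and "b + 2 \<le> a"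
  shows "real (a - b + 1) * (recip_binomial m b - recip_binomial m (a - 1))
    < real (a - b - 1) * (recip_binomial m (b - 1) - recip_binomial m a)"
proof -
  define D where "D x = recip_binomial m x - recip_binomial m (Suc x)" for x
  have D: "D x = real m / real (Suc m) * recip_binomial (Suc m) (Suc x)" if "m \<le> x" for x
    unfolding D_def using recip_binomial_diff that by simp
  have conv: "D (Suc x) - D x < D (Suc (Suc x)) - D (Suc x)" if "m \<le> x" for x
  proof -
    let ?R = "recip_binomial (Suc m)" and ?c = "real (Suc m) / real (Suc (Suc m))"
    have "?c * recip_binomial (Suc (Suc m)) (Suc (Suc (Suc x)))
        < ?c * recip_binomial (Suc (Suc m)) (Suc (Suc x))"
      using that by (intro mult_strict_left_mono recip_binomial_strict_decreasing) auto
    then have "?R (Suc (Suc x)) - ?R (Suc (Suc (Suc x))) < ?R (Suc x) - ?R (Suc (Suc x))"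
      using that recip_binomial_diff[of "Suc m" "Suc x"] recip_binomial_diff[of "Suc m" "Suc (Suc x)"]
      by simp
    then have "real m / real (Suc m) * (?R (Suc (Suc x)) - ?R (Suc x))
        < real m / real (Suc m) * (?R (Suc (Suc (Suc x))) - ?R (Suc (Suc x)))"
      using assms(1) by (intro mult_strict_left_mono) auto
    then show ?thesis
      using that by (simp add: D right_diff_distrib)
  qed
  define n where "n = a - b - 1"
  have n: "0 < n" "a = b - 1 + n + 2" "real (a - b + 1) = real n + 2" "real (a - b - 1) = real n"
    using assms unfolding n_def by auto
  define X where "X = recip_binomial m b - recip_binomial m (a - 1)"
  have "X = (\<Sum>i=1..n. D (b - 1 + i))"
    using sum_Suc_diff[of 1 n "\<lambda>i. - recip_binomial m (b - 1 + i)"] n(1,2) assms(2)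
    unfolding X_def D_def by (simp add: algebra_simps)
  then have "2 * X < real n * (D (b - 1) + D (b - 1 + n + 1))"
    using strictly_convex_interior_sum_less[where D = D and p = m, OF conv, of "b - 1" n] n(1) assms(2)
    by simp
  moreover have "recip_binomial m (b - 1) - recip_binomial m a = D (b - 1) + X + D (b - 1 + n + 1)"
    using n(2) assms(2) unfolding D_def X_def by simp
  ultimately show ?thesis
    unfolding n(3,4) X_def[symmetric] by (simp add: algebra_simps)
qed

section \<open>Moving a vertex between two classes\<close>

lemma Suc_times_binomial_Suc: "Suc m * (z choose Suc m) = (z - m) * (z choose m)"
  by (simp only: binomial_absorption binomial_absorb_comp)

lemma real_Suc_times_binomial_Suc:
  "real (Suc m) * real (z choose Suc m) = (real z - real m) * real (z choose m)"
proof (cases "m \<le> z")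
  case True
  then show ?thesis
    using arg_cong[OF Suc_times_binomial_Suc[of m z], of real] by (simp only: of_nat_mult of_nat_diff)
next
  case False
  then show ?thesis
    by (simp add: binomial_eq_0)
qed

text \<open>The number of copies of K_r(t) in a complete multipartite graph with two classes of sizes
  a and b, when the remaining classes contain C copies of K_r(t), A of K_(r-1)(t) and B of
  K_(r-2)(t).\<close>
definition two_class_count :: "nat \<Rightarrow> nat \<Rightarrow> nat \<Rightarrow> nat \<Rightarrow> nat \<Rightarrow> nat \<Rightarrow> nat" where
  "two_class_count t C A B a b = C + ((a choose t) + (b choose t)) * A + (a choose t) * (b choose t) * B"

lemma two_class_count_commute: "two_class_count t C A B a b = two_class_count t C A B b a"
  unfolding two_class_count_def by (simp add: ac_simps)

lemma two_class_count_move: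
  assumes "m \<le> x" and "m \<le> y"
  shows "real (Suc m) * (real (two_class_count (Suc m) C A B x (Suc y)) - real (two_class_count (Suc m) C A B (Suc x) y))
    = real (x choose m) * real (y choose m)
      * (real (Suc m) * (recip_binomial m x - recip_binomial m y) * real A + (real x - real y) * real B)"
proof -
  define F G where "F z = real (z choose Suc m)" and "G z = real (z choose m)" for z
  have absorb: "real (Suc m) * F z = (real z - real m) * G z" for z
    unfolding F_def G_def by (rule real_Suc_times_binomial_Suc)
  have "G x > 0" "G y > 0"
    using assms unfolding G_def by simp_all
  then have recip: "G x * G y * (recip_binomial m x - recip_binomial m y) = G y - G x"
    unfolding recip_binomial_def G_def[symmetric] by (simp add: field_simps)
  have diff: "real (two_class_count (Suc m) C A B x (Suc y)) - real (two_class_count (Suc m) C A B (Suc x) y)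
      = (G y - G x) * real A + (F x * G y - G x * F y) * real B"
    unfolding two_class_count_def F_def G_def by (simp add: algebra_simps)
  have cross: "real (Suc m) * (F x * G y - G x * F y) = (real x - real y) * G x * G y"
    using absorb[of x] absorb[of y] by algebra
  have "real (Suc m) * (real (two_class_count (Suc m) C A B x (Suc y)) - real (two_class_count (Suc m) C A B (Suc x) y))
      = real (Suc m) * (G y - G x) * real A + real (Suc m) * (F x * G y - G x * F y) * real B"
    unfolding diff by (simp add: algebra_simps)
  also have "\<dots> = G x * G y * (real (Suc m) * (recip_binomial m x - recip_binomial m y) * real A
      + (real x - real y) * real B)"
    unfolding cross recip[symmetric] by (simp add: algebra_simps)
  finally show ?thesis
    unfolding G_def .
qed

lemma two_class_count_move_nonincreasing:
  assumes "m \<le> x" and "m \<le> y"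
    and "two_class_count (Suc m) C A B x (Suc y) \<le> two_class_count (Suc m) C A B (Suc x) y"
  shows "real (Suc m) * (recip_binomial m x - recip_binomial m y) * real A + (real x - real y) * real B \<le> 0"
proof -
  define P Q where "P = real (x choose m) * real (y choose m)"
    and "Q = real (Suc m) * (recip_binomial m x - recip_binomial m y) * real A + (real x - real y) * real B"
  have "real (Suc m) * (real (two_class_count (Suc m) C A B x (Suc y))
      - real (two_class_count (Suc m) C A B (Suc x) y)) \<le> 0"
    using assms(3) by (simp add: mult_le_0_iff)
  then have "P * Q \<le> 0"
    unfolding P_def Q_def two_class_count_move[OF assms(1,2)] .
  moreover have "0 < P"
    using assms(1,2) unfolding P_def by simp
  ultimately show ?thesis
    using mult_le_0_iff[of P Q] unfolding Q_def by auto
qed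

lemma two_class_count_small_class:
  assumes "t \<le> a" and "b < t" and "0 < two_class_count t C A B a b" and "A = 0 \<Longrightarrow> C = 0"
  shows "two_class_count t C A B a b < two_class_count t C A B (a + 1) (b - 1)"
proof -
  obtain m where t: "t = Suc m"
    using assms(2) by (cases t) auto
  have "0 < A"
    using assms(2-4) unfolding two_class_count_def by (cases "A = 0") auto
  moreover have "a choose t < (a + 1) choose t"
    using assms(1) unfolding t by simp
  ultimately have "(a choose t) * A < ((a + 1) choose t) * A"
    by simp
  then show ?thesis
    using assms(2) unfolding two_class_count_def by (simp add: binomial_eq_0)
qed

lemma two_class_count_large_classes:
  assumes m: "0 < m" and ab: "Suc m \<le> b" "b + 2 \<le> a" and B: "0 < B"
    and down: "two_class_count (Suc m) C A B (a - 1) (b + 1) \<le> two_class_count (Suc m) C A B a b"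
    and up: "two_class_count (Suc m) C A B (a + 1) (b - 1) \<le> two_class_count (Suc m) C A B a b"
  shows False
proof -
  let ?\<psi> = "recip_binomial m" and ?T = "real (Suc m)" and ?d = "real (a - b)"
  define X Y where "X = ?\<psi> b - ?\<psi> (a - 1)" and "Y = ?\<psi> (b - 1) - ?\<psi> a"
  have "two_class_count (Suc m) C A B (a - 1) (Suc b) \<le> two_class_count (Suc m) C A B (Suc (a - 1)) b"
    using down ab by simp
  then have "?T * (?\<psi> (a - 1) - ?\<psi> b) * real A + (real (a - 1) - real b) * real B \<le> 0"
    by (rule two_class_count_move_nonincreasing[rotated 2]) (use ab in auto)
  moreover have "two_class_count (Suc m) C A B (b - 1) (Suc a) \<le> two_class_count (Suc m) C A B (Suc (b - 1)) a"
    using up ab two_class_count_commute[of "Suc m" C A B] by (metis Suc_diff_1 Suc_eq_plus1 less_le_trans zero_less_Suc)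
  then have "?T * (?\<psi> (b - 1) - ?\<psi> a) * real A + (real (b - 1) - real a) * real B \<le> 0"
    by (rule two_class_count_move_nonincreasing[rotated 2]) (use ab in auto)
  ultimately have i1: "(?d - 1) * real B \<le> ?T * real A * X" and i2: "?T * real A * Y \<le> (?d + 1) * real B"
    using ab unfolding X_def Y_def by (simp_all add: of_nat_diff algebra_simps)
  have conv: "(?d + 1) * X < (?d - 1) * Y"
    using recip_binomial_convexity[OF m _ ab(2)] ab unfolding X_def Y_def by (simp add: of_nat_diff algebra_simps)
  have d: "1 < ?d"
    using ab by simp
  then have "0 < ?T * real A * X"
    using i1 B by (smt (verit) mult_pos_pos of_nat_0_less_iff)
  then have X: "0 < X"
    by (simp add: zero_less_mult_iff mult_less_0_iff)
  then have "0 < (?d - 1) * Y"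
    using conv d by (smt (verit) mult_pos_pos)
  then have Y: "0 < Y"
    using d zero_less_mult_iff[of "?d - 1" Y] by linarith
  have "(?d - 1) * real B * Y \<le> ?T * real A * X * Y"
    using i1 Y by (rule mult_right_mono[OF _ less_imp_le])
  also have "\<dots> = ?T * real A * Y * X"
    by (simp add: ac_simps)
  also have "\<dots> \<le> (?d + 1) * real B * X"
    using i2 X by (rule mult_right_mono[OF _ less_imp_le])
  finally have "real B * ((?d - 1) * Y) \<le> real B * ((?d + 1) * X)"
    by (simp add: ac_simps)
  then show False
    using conv B by simp
qed

lemma two_class_count_unbalanced:
  assumes "2 \<le> t" and "1 \<le> b" and "b + 2 \<le> a" and "t \<le> a"
    and down: "two_class_count t C A B (a - 1) (b + 1) \<le> two_class_count t C A B a b"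
    and up: "two_class_count t C A B (a + 1) (b - 1) \<le> two_class_count t C A B a b"
    and pos: "0 < two_class_count t C A B a b"
    and mono: "B = 0 \<Longrightarrow> A = 0" "A = 0 \<Longrightarrow> C = 0"
  shows False
proof (cases "b < t")
  case True
  then show False
    using two_class_count_small_class[OF assms(4) True pos mono(2)] up by simp
next
  case False
  obtain m where t: "t = Suc m" and m: "0 < m"
    using assms(1) by (cases t) auto
  have "0 < B"
    using pos mono unfolding two_class_count_def by (cases "B = 0") auto
  then show False
    using two_class_count_large_classes[where m = m and a = a and b = b and A = A and B = B and C = C]
      m False assms(3) down up unfolding t by simp
qed

section \<open>Copies of K_r(t) in complete multipartite graphs\<close>

definition class_size_bij :: "'a set \<Rightarrow> ('a \<Rightarrow> 'c) \<Rightarrow> 'b set \<Rightarrow> ('b \<Rightarrow> 'd) \<Rightarrow> ('c \<Rightarrow> 'd) \<Rightarrow> bool" where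
  "class_size_bij V p W q \<phi> \<longleftrightarrow> bij_betw \<phi> (p ` V) (q ` W)
     \<and> (\<forall>c\<in>p ` V. card {x\<in>V. p x = c} = card {y\<in>W. q y = \<phi> c})"

lemma bij_betw_respecting_labels:
  assumes V: "finite V" and W: "finite W" and \<phi>: "class_size_bij V p W q \<phi>"
  shows "\<exists>f. bij_betw f V W \<and> (\<forall>x\<in>V. q (f x) = \<phi> (p x))"
proof -
  have "\<forall>c\<in>p ` V. \<exists>g. bij_betw g {x\<in>V. p x = c} {y\<in>W. q y = \<phi> c}"
    using V W \<phi> unfolding class_size_bij_def by (auto intro!: finite_same_card_bij)
  then obtain g where g: "\<And>c. c \<in> p ` V \<Longrightarrow> bij_betw (g c) {x\<in>V. p x = c} {y\<in>W. q y = \<phi> c}"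
    by metis
  define f where "f x = g (p x) x" for x
  have f: "f x \<in> W \<and> q (f x) = \<phi> (p x)" if "x \<in> V" for x
    using g[of "p x"] that unfolding f_def by (auto dest: bij_betwE)
  have inj: "inj_on \<phi> (p ` V)" and img: "\<phi> ` p ` V = q ` W"
    using \<phi> unfolding class_size_bij_def bij_betw_def by blast+
  have "inj_on f V"
  proof (rule inj_onI)
    fix x y assume xy: "x \<in> V" "y \<in> V" "f x = f y"
    then have "\<phi> (p x) = \<phi> (p y)"
      using f[of x] f[of y] by simp
    then have "p x = p y"
      using inj xy by (auto dest: inj_onD)
    then show "x = y"
      using g[of "p x"] xy unfolding f_def bij_betw_def by (auto dest: inj_onD)
  qed
  moreover have "W \<subseteq> f ` V"
  proof
    fix y assume y: "y \<in> W"
    then have "q y \<in> \<phi> ` p ` V"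
      unfolding img by blast
    then obtain c where c: "c \<in> p ` V" "q y = \<phi> c"
      by blast
    then obtain x where "x \<in> V" "p x = c" "y = g c x"
      using g[OF c(1)] y unfolding bij_betw_def by blast
    then show "y \<in> f ` V"
      unfolding f_def by blast
  qed
  ultimately show ?thesis
    using f unfolding bij_betw_def by blast
qed

lemma graph_iso_class_size_bij:
  assumes "graph_iso V E W F"
    and E: "\<forall>x\<in>V. \<forall>y\<in>V. E x y \<longleftrightarrow> p x \<noteq> p y" and F: "\<forall>x\<in>W. \<forall>y\<in>W. F x y \<longleftrightarrow> q x \<noteq> q y"
  shows "\<exists>\<phi>. class_size_bij V p W q \<phi>"
proof -
  obtain f where f: "bij_betw f V W" and EF: "\<forall>x\<in>V. \<forall>y\<in>V. E x y \<longleftrightarrow> F (f x) (f y)"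
    using assms(1) unfolding graph_iso_def by blast
  have ker: "p x = p y \<longleftrightarrow> q (f x) = q (f y)" if "x \<in> V" "y \<in> V" for x y
    using E F EF f that by (meson bij_betwE)
  define \<phi> where "\<phi> c = q (f (inv_into V p c))" for c
  have \<phi>: "\<phi> (p x) = q (f x)" if "x \<in> V" for x
  proof -
    have "inv_into V p (p x) \<in> V" "p (inv_into V p (p x)) = p x"
      using that by (auto simp: inv_into_into f_inv_into_f)
    then show ?thesis
      unfolding \<phi>_def using ker[of "inv_into V p (p x)" x] that by simp
  qed
  have "inj_on \<phi> (p ` V)"
    using \<phi> ker by (smt (verit) imageE inj_onI)
  moreover have "\<phi> ` p ` V = q ` W"
    using \<phi> f unfolding bij_betw_def by (auto simp: image_image)
  moreover have "card {x\<in>V. p x = c} = card {y\<in>W. q y = \<phi> c}" if "c \<in> p ` V" for c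
  proof -
    obtain x0 where x0: "x0 \<in> V" "c = p x0"
      using \<open>c \<in> p ` V\<close> by blast
    have "f ` {x\<in>V. p x = c} = {y\<in>W. q y = \<phi> c}"
      using f ker x0 \<phi> unfolding bij_betw_def by auto
    moreover have "inj_on f {x\<in>V. p x = c}"
      using f unfolding bij_betw_def by (auto intro: inj_on_subset)
    ultimately show ?thesis
      using card_image by fastforce
  qed
  ultimately show ?thesis
    unfolding class_size_bij_def bij_betw_def by blast
qed

lemma multipartite_graph_iso_iff:
  assumes V: "finite V" and W: "finite W"
    and E: "\<forall>x\<in>V. \<forall>y\<in>V. E x y \<longleftrightarrow> p x \<noteq> p y" and F: "\<forall>x\<in>W. \<forall>y\<in>W. F x y \<longleftrightarrow> q x \<noteq> q y"
  shows "graph_iso V E W F \<longleftrightarrow> (\<exists>\<phi>. class_size_bij V p W q \<phi>)"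
proof
  assume "\<exists>\<phi>. class_size_bij V p W q \<phi>"
  then obtain \<phi> f where \<phi>: "class_size_bij V p W q \<phi>" and f: "bij_betw f V W" "\<forall>x\<in>V. q (f x) = \<phi> (p x)"
    using bij_betw_respecting_labels[OF V W] by blast
  have "\<forall>x\<in>V. \<forall>y\<in>V. E x y \<longleftrightarrow> F (f x) (f y)"
    using E F f \<phi> unfolding class_size_bij_def bij_betw_def inj_on_def by (smt (verit) image_eqI)
  then show "graph_iso V E W F"
    using f unfolding graph_iso_def by blast
qed (rule graph_iso_class_size_bij[OF _ E F])

definition equipartite :: "('a \<Rightarrow> nat) \<Rightarrow> nat \<Rightarrow> nat \<Rightarrow> 'a set \<Rightarrow> bool" where
  "equipartite p r t S \<longleftrightarrow> finite S \<and> card (p ` S) = r \<and> (\<forall>c\<in>p ` S. card {x\<in>S. p x = c} = t)"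

definition count_equipartite :: "('a \<Rightarrow> nat) \<Rightarrow> nat \<Rightarrow> nat \<Rightarrow> 'a set \<Rightarrow> nat" where
  "count_equipartite p r t V = card {S. S \<subseteq> V \<and> equipartite p r t S}"

lemma Kpart_E_iff: "\<forall>x\<in>Kpart_V r t. \<forall>y\<in>Kpart_V r t. Kpart_E r t x y \<longleftrightarrow> fst x \<noteq> fst y"
  unfolding Kpart_E_def by simp

lemma complete_multipartite_Kpart: "complete_multipartite (Kpart_V r t) (Kpart_E r t)"
  unfolding complete_multipartite_def using Kpart_E_iff by blast

lemma graph_iso_Kpart_iff_equipartite:
  assumes t: "0 < t" and S: "finite S" and E: "\<forall>x\<in>S. \<forall>y\<in>S. E x y \<longleftrightarrow> p x \<noteq> p y"
  shows "graph_iso S E (Kpart_V r t) (Kpart_E r t) \<longleftrightarrow> equipartite p r t S"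
proof -
  have fst_K: "fst ` Kpart_V r t = {0..<r}"
    using t unfolding Kpart_V_def by force
  have class_K: "card {y\<in>Kpart_V r t. fst y = i} = t" if "i < r" for i
  proof -
    have "{y\<in>Kpart_V r t. fst y = i} = {i} \<times> {0..<t}"
      using that unfolding Kpart_V_def by auto
    then show ?thesis
      by simp
  qed
  have "graph_iso S E (Kpart_V r t) (Kpart_E r t) \<longleftrightarrow> (\<exists>\<phi>. class_size_bij S p (Kpart_V r t) fst \<phi>)"
    by (rule multipartite_graph_iso_iff[OF S _ E Kpart_E_iff]) (simp add: Kpart_V_def)
  also have "\<dots> \<longleftrightarrow> card (p ` S) = r \<and> (\<forall>c\<in>p ` S. card {x\<in>S. p x = c} = t)"
  proof
    assume "\<exists>\<phi>. class_size_bij S p (Kpart_V r t) fst \<phi>"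
    then show "card (p ` S) = r \<and> (\<forall>c\<in>p ` S. card {x\<in>S. p x = c} = t)"
      using class_K unfolding class_size_bij_def fst_K by (auto simp: bij_betw_same_card dest: bij_betwE)
  next
    assume *: "card (p ` S) = r \<and> (\<forall>c\<in>p ` S. card {x\<in>S. p x = c} = t)"
    then obtain \<phi> where \<phi>: "bij_betw \<phi> (p ` S) {0..<r}"
      using S finite_same_card_bij[of "p ` S" "{0..<r}"] by auto
    have "\<phi> c < r" if "c \<in> p ` S" for c
      using bij_betwE[OF \<phi>] that by auto
    then have "class_size_bij S p (Kpart_V r t) fst \<phi>"
      using * \<phi> class_K unfolding class_size_bij_def fst_K by simp
    then show "\<exists>\<phi>. class_size_bij S p (Kpart_V r t) fst \<phi>"
      by blast
  qed
  finally show ?thesis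
    using S unfolding equipartite_def by blast
qed

lemma ind_count_Kpart_eq_count_equipartite:
  assumes "0 < t" and V: "finite V" and E: "\<forall>x\<in>V. \<forall>y\<in>V. E x y \<longleftrightarrow> p x \<noteq> p y"
  shows "ind_count (Kpart_V r t) (Kpart_E r t) V E = count_equipartite p r t V"
proof -
  have "card S = card (Kpart_V r t) \<and> graph_iso S (induced E S) (Kpart_V r t) (Kpart_E r t)
      \<longleftrightarrow> equipartite p r t S" if "S \<subseteq> V" for S
  proof -
    have "finite S"
      using V that by (rule finite_subset[rotated])
    moreover have "\<forall>x\<in>S. \<forall>y\<in>S. induced E S x y \<longleftrightarrow> p x \<noteq> p y"
      using E that unfolding induced_def by auto
    ultimately have "graph_iso S (induced E S) (Kpart_V r t) (Kpart_E r t) \<longleftrightarrow> equipartite p r t S"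
      by (rule graph_iso_Kpart_iff_equipartite[OF assms(1)])
    then show ?thesis
      using graph_iso_card by blast
  qed
  then have "{S. S \<subseteq> V \<and> card S = card (Kpart_V r t) \<and> graph_iso S (induced E S) (Kpart_V r t) (Kpart_E r t)}
      = {S. S \<subseteq> V \<and> equipartite p r t S}"
    by blast
  then show ?thesis
    unfolding ind_count_def count_equipartite_def by simp
qed

lemma equipartite_Un_class:
  assumes X: "X \<noteq> {}" "finite X" "\<forall>x\<in>X. p x = c" and Z: "\<forall>z\<in>Z. p z \<noteq> c"
  shows "equipartite p (Suc r) t (X \<union> Z) \<longleftrightarrow> card X = t \<and> equipartite p r t Z"
proof -
  have img: "p ` (X \<union> Z) = insert c (p ` Z)" and c: "c \<notin> p ` Z"
    using X Z by auto
  have "{x\<in>X \<union> Z. p x = d} = {x\<in>Z. p x = d}" if "d \<in> p ` Z" for d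
    using X c that by auto
  moreover have "{x\<in>X \<union> Z. p x = c} = X"
    using X Z by auto
  ultimately have "(\<forall>d\<in>p ` (X \<union> Z). card {x\<in>X \<union> Z. p x = d} = t)
      \<longleftrightarrow> card X = t \<and> (\<forall>d\<in>p ` Z. card {x\<in>Z. p x = d} = t)"
    unfolding img by simp
  moreover have "finite (X \<union> Z) \<longleftrightarrow> finite Z"
    using X(2) by simp
  moreover have "card (p ` (X \<union> Z)) = Suc (card (p ` Z))" if "finite Z"
    unfolding img using c that by simp
  ultimately show ?thesis
    unfolding equipartite_def by auto
qed

lemma bij_betw_Un_class:
  fixes p :: "'a \<Rightarrow> nat" and c :: nat
  assumes t: "0 < t" and V: "finite V"
  defines "P \<equiv> {x\<in>V. p x = c}" and "R \<equiv> {x\<in>V. p x \<noteq> c}"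
  shows "bij_betw (\<lambda>(X, Z). X \<union> Z) ({X. X \<subseteq> P \<and> card X = t} \<times> {Z. Z \<subseteq> R \<and> equipartite p r t Z})
    {S. S \<subseteq> V \<and> equipartite p (Suc r) t S \<and> S \<inter> P \<noteq> {}}"
    (is "bij_betw _ (?X \<times> ?Z) ?F")
proof (rule bij_betw_imageI)
  have PR: "P \<inter> R = {}" "P \<union> R = V"
    unfolding P_def R_def by blast+
  show "inj_on (\<lambda>(X, Z). X \<union> Z) (?X \<times> ?Z)"
  proof (rule inj_onI, clarsimp)
    fix X Z X' Z'
    assume "X \<subseteq> P" "Z \<subseteq> R" "X' \<subseteq> P" "Z' \<subseteq> R" "X \<union> Z = X' \<union> Z'"
    then show "X = X' \<and> Z = Z'"
      using PR(1) by blast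
  qed
  have key: "X \<union> Z \<in> ?F \<longleftrightarrow> X \<in> ?X \<and> Z \<in> ?Z" if "X \<subseteq> P" "Z \<subseteq> R" for X Z
  proof (cases "X = {}")
    case True
    then show ?thesis
      using that t PR by auto
  next
    case False
    have "finite X" "\<forall>x\<in>X. p x = c" "\<forall>z\<in>Z. p z \<noteq> c"
      using that V finite_subset unfolding P_def R_def by fastforce+
    then show ?thesis
      using that PR False equipartite_Un_class[OF False, of p c Z r t] by auto
  qed
  show "(\<lambda>(X, Z). X \<union> Z) ` (?X \<times> ?Z) = ?F"
  proof (intro equalityI subsetI)
    fix S assume "S \<in> (\<lambda>(X, Z). X \<union> Z) ` (?X \<times> ?Z)"
    then show "S \<in> ?F"
      using key by auto
  next
    fix S assume S: "S \<in> ?F"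
    then have "S = (S \<inter> P) \<union> (S \<inter> R)"
      using PR by blast
    moreover have "S \<inter> P \<in> ?X \<and> S \<inter> R \<in> ?Z"
      using key[of "S \<inter> P" "S \<inter> R"] S calculation by auto
    ultimately show "S \<in> (\<lambda>(X, Z). X \<union> Z) ` (?X \<times> ?Z)"
      by (metis (no_types, lifting) SigmaI case_prod_conv image_eqI)
  qed
qed

lemma count_equipartite_split_class:
  fixes p :: "'a \<Rightarrow> nat" and c :: nat
  assumes t: "0 < t" and V: "finite V"
  defines "R \<equiv> {x\<in>V. p x \<noteq> c}"
  shows "count_equipartite p (Suc r) t V
    = count_equipartite p (Suc r) t R + (card {x\<in>V. p x = c} choose t) * count_equipartite p r t R"
proof -
  let ?P = "{x\<in>V. p x = c}" and ?F = "{S. S \<subseteq> V \<and> equipartite p (Suc r) t S}"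
  have "finite ?F"
    using V by (auto intro: finite_subset[of _ "Pow V"])
  then have "card ?F = card {S\<in>?F. S \<inter> ?P = {}} + card {S\<in>?F. S \<inter> ?P \<noteq> {}}"
    by (rule card_filter_split)
  moreover have "{S\<in>?F. S \<inter> ?P = {}} = {S. S \<subseteq> R \<and> equipartite p (Suc r) t S}"
    unfolding R_def by auto
  moreover have "card {S\<in>?F. S \<inter> ?P \<noteq> {}}
      = card {X. X \<subseteq> ?P \<and> card X = t} * card {Z. Z \<subseteq> R \<and> equipartite p r t Z}"
    using bij_betw_same_card[OF bij_betw_Un_class[OF t V, of p c r]]
    unfolding R_def by (simp add: card_cartesian_product conj_assoc)
  moreover have "card {X. X \<subseteq> ?P \<and> card X = t} = card ?P choose t"
    using V by (simp add: n_subsets)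
  ultimately show ?thesis
    unfolding count_equipartite_def by simp
qed

lemma count_equipartite_cong:
  assumes "\<forall>x\<in>V. p x = q x"
  shows "count_equipartite p r t V = count_equipartite q r t V"
proof -
  have "equipartite p r t S \<longleftrightarrow> equipartite q r t S" if "S \<subseteq> V" for S
  proof -
    have "p ` S = q ` S" "\<And>c. {x\<in>S. p x = c} = {x\<in>S. q x = c}"
      using assms that by (auto intro!: image_cong)
    then show ?thesis
      unfolding equipartite_def by simp
  qed
  then show ?thesis
    unfolding count_equipartite_def by (metis (lifting))
qed

lemma count_equipartite_pos_iff:
  assumes "finite V"
  shows "0 < count_equipartite p r t V \<longleftrightarrow> (\<exists>S\<subseteq>V. equipartite p r t S)"
proof -
  have "finite {S. S \<subseteq> V \<and> equipartite p r t S}"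
    using assms by (auto intro: finite_subset[of _ "Pow V"])
  then show ?thesis
    unfolding count_equipartite_def by (auto simp: card_gt_0_iff)
qed

lemma count_equipartite_pos_Suc:
  assumes V: "finite V" and pos: "0 < count_equipartite p (Suc r) t V"
  shows "0 < count_equipartite p r t V"
proof -
  obtain S where S: "S \<subseteq> V" "equipartite p (Suc r) t S"
    using pos count_equipartite_pos_iff[OF V] by blast
  then obtain c where "c \<in> p ` S"
    unfolding equipartite_def by fastforce
  then have ne: "{x\<in>S. p x = c} \<noteq> {}"
    by blast
  have fin: "finite {x\<in>S. p x = c}"
    using S(2) unfolding equipartite_def by simp
  have "{x\<in>S. p x = c} \<union> {x\<in>S. p x \<noteq> c} = S"
    by blast
  then have "equipartite p (Suc r) t ({x\<in>S. p x = c} \<union> {x\<in>S. p x \<noteq> c})"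
    using S(2) by (simp only:)
  moreover have "\<forall>x\<in>{x\<in>S. p x = c}. p x = c" "\<forall>z\<in>{x\<in>S. p x \<noteq> c}. p z \<noteq> c"
    by auto
  ultimately have "equipartite p r t {x\<in>S. p x \<noteq> c}"
    using equipartite_Un_class[OF ne fin] by (meson iffD1)
  moreover have "{x\<in>S. p x \<noteq> c} \<subseteq> V"
    using S(1) by blast
  ultimately show ?thesis
    using count_equipartite_pos_iff[OF V] by blast
qed

lemma count_equipartite_two_classes:
  fixes p :: "'a \<Rightarrow> nat" and c1 c2 :: nat
  assumes t: "0 < t" and V: "finite V" and c12: "c1 \<noteq> c2"
  defines "R \<equiv> {x\<in>V. p x \<noteq> c1 \<and> p x \<noteq> c2}"
  shows "count_equipartite p (Suc (Suc r)) t V = two_class_count t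
    (count_equipartite p (Suc (Suc r)) t R) (count_equipartite p (Suc r) t R) (count_equipartite p r t R)
    (card {x\<in>V. p x = c1}) (card {x\<in>V. p x = c2})"
proof -
  let ?R1 = "{x\<in>V. p x \<noteq> c1}"
  have "{x\<in>?R1. p x \<noteq> c2} = R" "{x\<in>?R1. p x = c2} = {x\<in>V. p x = c2}"
    unfolding R_def using c12 by auto
  then show ?thesis
    using count_equipartite_split_class[OF t V, of p "Suc r" c1]
      count_equipartite_split_class[OF t, of ?R1 p "Suc r" c2]
      count_equipartite_split_class[OF t, of ?R1 p r c2] V
    unfolding two_class_count_def by (simp add: algebra_simps)
qed

lemma count_equipartite_move_vertex:
  fixes p :: "'a \<Rightarrow> nat" and c1 c2 :: nat
  assumes t: "0 < t" and V: "finite V" and c12: "c1 \<noteq> c2" and v: "v \<in> V" "p v = c1"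
  defines "R \<equiv> {x\<in>V. p x \<noteq> c1 \<and> p x \<noteq> c2}"
  shows "count_equipartite (p(v := c2)) (Suc (Suc r)) t V = two_class_count t
    (count_equipartite p (Suc (Suc r)) t R) (count_equipartite p (Suc r) t R) (count_equipartite p r t R)
    (card {x\<in>V. p x = c1} - 1) (card {x\<in>V. p x = c2} + 1)"
proof -
  let ?q = "p(v := c2)"
  have "{x\<in>V. ?q x \<noteq> c1 \<and> ?q x \<noteq> c2} = R"
    unfolding R_def using v by auto
  moreover have "count_equipartite ?q k t R = count_equipartite p k t R" for k
    using v unfolding R_def by (intro count_equipartite_cong) auto
  moreover have "{x\<in>V. ?q x = c1} = {x\<in>V. p x = c1} - {v}" "{x\<in>V. ?q x = c2} = insert v {x\<in>V. p x = c2}"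
    using v c12 by auto
  ultimately show ?thesis
    using count_equipartite_two_classes[OF t V c12, of ?q r] V v c12 by simp
qed

section \<open>Extremal complete multipartite graphs are Turan graphs\<close>

lemma card_mod_class:
  assumes "0 < k" and "c < k"
  shows "card {y\<in>{0..<n}. y mod k = c} = n div k + (if c < n mod k then 1 else 0)"
proof (induction n)
  case 0
  then show ?case
    by simp
next
  case (Suc n)
  have "{y\<in>{0..<Suc n}. y mod k = c} = {y\<in>{0..<n}. y mod k = c} \<union> (if n mod k = c then {n} else {})"
    by (auto simp: less_Suc_eq)
  then have "card {y\<in>{0..<Suc n}. y mod k = c} = card {y\<in>{0..<n}. y mod k = c} + (if n mod k = c then 1 else 0)"
    by (simp add: card_insert_if)
  then show ?case
    using Suc.IH assms by (cases "Suc (n mod k) = k") (auto simp: mod_Suc div_Suc)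
qed

lemma turan_E_iff: "\<forall>x\<in>{0..<n}. \<forall>y\<in>{0..<n}. turan_E k n x y \<longleftrightarrow> x mod k \<noteq> y mod k"
  unfolding turan_E_def by auto

lemma simple_graph_turan_E: "simple_graph {0..<n} (turan_E k n)"
  unfolding simple_graph_def turan_E_def by auto

lemma bij_betw_enumerate_subset_first:
  assumes L: "finite L" and B: "B \<subseteq> L"
  shows "\<exists>\<phi>. bij_betw \<phi> L {0..<card L} \<and> (\<forall>c\<in>L. \<phi> c < card B \<longleftrightarrow> c \<in> B)"
proof -
  have fin: "finite B"
    using L B by (rule finite_subset[rotated])
  obtain \<phi>1 where \<phi>1: "bij_betw \<phi>1 B {0..<card B}"
    using fin finite_same_card_bij[of B "{0..<card B}"] by auto
  have "card (L - B) = card {card B..<card L}"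
    using L B fin by (simp add: card_Diff_subset)
  then obtain \<phi>2 where \<phi>2: "bij_betw \<phi>2 (L - B) {card B..<card L}"
    using L finite_same_card_bij[of "L - B" "{card B..<card L}"] by auto
  define \<phi> where "\<phi> c = (if c \<in> B then \<phi>1 c else \<phi>2 c)" for c
  have "bij_betw \<phi> B {0..<card B}" "bij_betw \<phi> (L - B) {card B..<card L}"
    using \<phi>1 \<phi>2 by (auto simp: \<phi>_def intro: bij_betw_cong[THEN iffD1, rotated])
  then have "bij_betw \<phi> (B \<union> (L - B)) ({0..<card B} \<union> {card B..<card L})"
    by (rule bij_betw_combine) auto
  moreover have "B \<union> (L - B) = L" "{0..<card B} \<union> {card B..<card L} = {0..<card L}"
    using B L card_mono[OF L B] by auto
  moreover have "\<phi> c < card B \<longleftrightarrow> c \<in> B" if "c \<in> L" for c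
    using that bij_betwE[OF \<phi>1] bij_betwE[OF \<phi>2] unfolding \<phi>_def
    by (cases "c \<in> B") (auto simp: not_less)
  ultimately show ?thesis
    by auto
qed

lemma card_eq_sum_class_sizes:
  assumes "finite V"
  shows "card V = (\<Sum>c\<in>p ` V. card {x\<in>V. p x = c})"
  using sum.image_gen[OF assms, of "\<lambda>_. 1 :: nat" p] by simp

lemma image_mod_atLeastLessThan:
  fixes k n :: nat
  assumes "0 < k" and "k \<le> n"
  shows "(\<lambda>y. y mod k) ` {0..<n} = {0..<k}"
proof (intro equalityI subsetI)
  fix c assume "c \<in> {0..<k}"
  then have "c < k"
    by simp
  then have "c \<in> {0..<n}" "c = c mod k"
    using assms(2) by simp_all
  then show "c \<in> (\<lambda>y. y mod k) ` {0..<n}"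
    by (rule rev_image_eqI)
qed (use assms in auto)

lemma balanced_sizes_div_mod:
  fixes s :: "'b \<Rightarrow> nat"
  assumes L: "finite L" "L \<noteq> {}" and bal: "\<forall>c\<in>L. \<forall>d\<in>L. s c \<le> s d + 1"
  obtains B where "B \<subseteq> L" "card B = (\<Sum>c\<in>L. s c) mod card L"
    "\<forall>c\<in>L. s c = (\<Sum>c\<in>L. s c) div card L + (if c \<in> B then 1 else 0)"
proof -
  define m where "m = Min (s ` L)"
  define B where "B = {c\<in>L. s c = Suc m}"
  have "m \<in> s ` L"
    unfolding m_def using L by (intro Min_in) auto
  then obtain c0 where c0: "s c0 = m" "c0 \<in> L"
    by (metis imageE)
  have s: "s c = m + (if c \<in> B then 1 else 0)" if "c \<in> L" for c
    using bal c0 that Min_le[OF finite_imageI[OF L(1)], of "s c" s]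
    unfolding m_def B_def by (fastforce simp: le_Suc_eq)
  have "c0 \<notin> B"
    using c0 unfolding B_def by simp
  then have "B \<subset> L"
    using c0(2) unfolding B_def by blast
  then have "card B < card L"
    by (rule psubset_card_mono[OF L(1)])
  moreover have "(\<Sum>c\<in>L. s c) = (\<Sum>c\<in>L. m + (if c \<in> B then 1 else 0))"
    by (intro sum.cong refl s)
  then have "(\<Sum>c\<in>L. s c) = card L * m + card B"
    using L(1) unfolding B_def by (simp add: sum.distrib sum.If_cases Int_def)
  ultimately have div: "(\<Sum>c\<in>L. s c) div card L = m" "(\<Sum>c\<in>L. s c) mod card L = card B"
    by (auto simp: add.commute)
  show ?thesis
  proof (rule that)
    show "B \<subseteq> L"
      unfolding B_def by blast
  qed (use s div in simp_all)
qed

lemma balanced_multipartite_graph_iso_turan: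
  assumes V: "finite V" and n: "card V = n" and "V \<noteq> {}"
    and E: "\<forall>x\<in>V. \<forall>y\<in>V. E x y \<longleftrightarrow> p x \<noteq> p y"
    and bal: "\<forall>c\<in>p ` V. \<forall>d\<in>p ` V. card {x\<in>V. p x = c} \<le> card {x\<in>V. p x = d} + 1"
  shows "graph_iso V E {0..<n} (turan_E (card (p ` V)) n)"
proof -
  define k where "k = card (p ` V)"
  have L: "finite (p ` V)" "p ` V \<noteq> {}"
    using V \<open>V \<noteq> {}\<close> by auto
  then have k: "0 < k" "k \<le> n"
    using card_image_le[OF V, of p] n unfolding k_def by auto
  have sum: "(\<Sum>c\<in>p ` V. card {x\<in>V. p x = c}) = n"
    using card_eq_sum_class_sizes[OF V, of p] n by simp
  obtain B where B: "B \<subseteq> p ` V" "card B = n mod k"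
    "\<forall>c\<in>p ` V. card {x\<in>V. p x = c} = n div k + (if c \<in> B then 1 else 0)"
    using balanced_sizes_div_mod[OF L bal] unfolding sum k_def[symmetric] by blast
  obtain \<phi> where \<phi>: "bij_betw \<phi> (p ` V) {0..<k}" "\<forall>c\<in>p ` V. \<phi> c < card B \<longleftrightarrow> c \<in> B"
    using bij_betw_enumerate_subset_first[OF L(1) B(1)] unfolding k_def by blast
  have "card {x\<in>V. p x = c} = card {y\<in>{0..<n}. y mod k = \<phi> c}" if "c \<in> p ` V" for c
    using card_mod_class[OF k(1), of "\<phi> c" n] bij_betwE[OF \<phi>(1)] \<phi>(2) B that by auto
  then have "class_size_bij V p {0..<n} (\<lambda>y. y mod k) \<phi>"
    using \<phi>(1) image_mod_atLeastLessThan[OF k] unfolding class_size_bij_def by simp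
  then have "graph_iso V E {0..<n} (turan_E k n)"
    using multipartite_graph_iso_iff[OF V _ E turan_E_iff] by blast
  then show ?thesis
    unfolding k_def .
qed

lemma count_equipartite_turan_pos:
  assumes "0 < t" and "r * t \<le> n" and r: "0 < r"
  shows "0 < count_equipartite (\<lambda>x. x mod r) r t {0..<n}"
proof -
  have img: "(\<lambda>x. x mod r) ` {0..<r * t} = {0..<r}"
    using assms(1) r by (intro image_mod_atLeastLessThan) auto
  have "equipartite (\<lambda>x. x mod r) r t {0..<r * t}"
    unfolding equipartite_def img using card_mod_class[OF r, of _ "r * t"] r by simp
  moreover have "{0..<r * t} \<subseteq> {0..<n}"
    using assms(2) by auto
  ultimately show ?thesis
    using count_equipartite_pos_iff[of "{0..<n}"] by blast
qed

lemma count_equipartite_le_of_extremal: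
  assumes t: "0 < t" and E: "simple_graph V E" and n: "card V = n"
    and p: "\<forall>x\<in>V. \<forall>y\<in>V. E x y \<longleftrightarrow> p x \<noteq> p y"
    and ext: "ind_count (Kpart_V r t) (Kpart_E r t) V E = ind_max (Kpart_V r t) (Kpart_E r t) n"
  shows "count_equipartite q r t V \<le> count_equipartite p r t V"
proof -
  define F where "F x y = (x \<in> V \<and> y \<in> V \<and> q x \<noteq> q y)" for x y
  have V: "finite V"
    using E unfolding simple_graph_def by blast
  have F: "simple_graph V F" "\<forall>x\<in>V. \<forall>y\<in>V. F x y \<longleftrightarrow> q x \<noteq> q y"
    using V unfolding simple_graph_def F_def by auto
  have "count_equipartite q r t V = ind_count (Kpart_V r t) (Kpart_E r t) V F"
    using ind_count_Kpart_eq_count_equipartite[OF t V F(2)] by simp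
  also have "\<dots> \<le> ind_count (Kpart_V r t) (Kpart_E r t) V E"
    unfolding ext by (rule ind_count_le_ind_max[OF F(1) n])
  also have "\<dots> = count_equipartite p r t V"
    by (rule ind_count_Kpart_eq_count_equipartite[OF t V p])
  finally show ?thesis .
qed

lemma extremal_labelling_large_class_le:
  assumes t: "2 \<le> t" and r: "2 \<le> r" and V: "finite V"
    and max: "\<And>q. count_equipartite q r t V \<le> count_equipartite p r t V"
    and pos: "0 < count_equipartite p r t V"
    and c: "c1 \<in> p ` V" "c2 \<in> p ` V" and large: "t \<le> card {x\<in>V. p x = c1}"
  shows "card {x\<in>V. p x = c1} \<le> card {x\<in>V. p x = c2} + 1"
proof (rule ccontr)
  assume "\<not> ?thesis"
  then have big: "card {x\<in>V. p x = c2} + 2 \<le> card {x\<in>V. p x = c1}"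
    by simp
  obtain r' where r': "r = Suc (Suc r')"
    using r by (metis add_2_eq_Suc le_Suc_ex)
  have t0: "0 < t" and c12: "c1 \<noteq> c2"
    using t big by auto
  obtain v w where v: "v \<in> V" "p v = c1" and w: "w \<in> V" "p w = c2"
    using c by blast
  define R where "R = {x\<in>V. p x \<noteq> c1 \<and> p x \<noteq> c2}"
  define C A B where "C = count_equipartite p (Suc (Suc r')) t R" and "A = count_equipartite p (Suc r') t R"
    and "B = count_equipartite p r' t R"
  define a b where "a = card {x\<in>V. p x = c1}" and "b = card {x\<in>V. p x = c2}"
  have "{x\<in>V. p x \<noteq> c2 \<and> p x \<noteq> c1} = R"
    unfolding R_def by blast
  then have "count_equipartite p r t V = two_class_count t C A B a b"
    "count_equipartite (p(v := c2)) r t V = two_class_count t C A B (a - 1) (b + 1)"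
    "count_equipartite (p(w := c1)) r t V = two_class_count t C A B (a + 1) (b - 1)"
    using count_equipartite_two_classes[OF t0 V c12, of p r']
      count_equipartite_move_vertex[where p = p, OF t0 V c12 v, of r']
      count_equipartite_move_vertex[where p = p, OF t0 V c12[symmetric] w, of r']
    unfolding r' R_def C_def A_def B_def a_def b_def by (simp_all add: two_class_count_commute)
  moreover have "{x\<in>V. p x = c2} \<noteq> {}"
    using w by blast
  then have "1 \<le> b"
    using V unfolding b_def by (simp add: Suc_le_eq card_gt_0_iff)
  moreover have "finite R"
    using V unfolding R_def by simp
  then have "B = 0 \<Longrightarrow> A = 0" "A = 0 \<Longrightarrow> C = 0"
    unfolding A_def B_def C_def using count_equipartite_pos_Suc by (metis neq0_conv)+
  ultimately show False
    using two_class_count_unbalanced[OF t, of b a C A B] max[of "p(v := c2)"] max[of "p(w := c1)"] pos big large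
    unfolding a_def b_def by auto
qed

lemma extremal_labelling_balanced:
  assumes t: "2 \<le> t" and r: "2 \<le> r" and V: "finite V"
    and max: "\<And>q. count_equipartite q r t V \<le> count_equipartite p r t V"
    and pos: "0 < count_equipartite p r t V"
  shows "\<forall>c\<in>p ` V. \<forall>d\<in>p ` V. card {x\<in>V. p x = c} \<le> card {x\<in>V. p x = d} + 1"
proof -
  define s where "s c = card {x\<in>V. p x = c}" for c
  obtain S where S: "S \<subseteq> V" "equipartite p r t S"
    using pos count_equipartite_pos_iff[OF V] by blast
  then obtain c0 where c0: "c0 \<in> p ` S"
    using r unfolding equipartite_def by fastforce
  have "card {x\<in>S. p x = c0} = t"
    using S(2) c0 unfolding equipartite_def by blast
  moreover have "card {x\<in>S. p x = c0} \<le> s c0"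
    unfolding s_def using S(1) V by (intro card_mono) auto
  ultimately have "t \<le> s c0"
    by simp
  have c0V: "c0 \<in> p ` V"
    using c0 S(1) by blast
  have fin: "finite (s ` p ` V)" "s ` p ` V \<noteq> {}"
    using V c0V by auto
  obtain cmax where cmax: "Max (s ` p ` V) = s cmax" "cmax \<in> p ` V"
    using Max_in[OF fin] by (rule imageE)
  obtain cmin where cmin: "Min (s ` p ` V) = s cmin" "cmin \<in> p ` V"
    using Min_in[OF fin] by (rule imageE)
  have "t \<le> s cmax"
    using \<open>t \<le> s c0\<close> Max_ge[OF fin(1), of "s c0"] c0V unfolding cmax(1) by simp
  then have "s cmax \<le> s cmin + 1"
    using extremal_labelling_large_class_le[OF t r V max pos cmax(2) cmin(2)] unfolding s_def by simp
  moreover have "s c \<le> s cmax" "s cmin \<le> s c" if "c \<in> p ` V" for c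
    using Max_ge[OF fin(1), of "s c"] Min_le[OF fin(1), of "s c"] that unfolding cmax(1) cmin(1) by simp_all
  ultimately show ?thesis
    unfolding s_def[symmetric] by (meson add_le_mono1 le_trans)
qed

lemma extremal_complete_multipartite_turan:
  fixes V :: "'a set"
  assumes r: "2 \<le> r" and t: "2 \<le> t" and n: "r * t \<le> n"
    and E: "simple_graph V E" and cV: "card V = n" and cm: "complete_multipartite V E"
    and ext: "ind_count (Kpart_V r t) (Kpart_E r t) V E = ind_max (Kpart_V r t) (Kpart_E r t) n"
  shows "\<exists>k\<ge>r. graph_iso V E {0..<n} (turan_E k n)"
proof -
  have V: "finite V" and t0: "0 < t"
    using E t unfolding simple_graph_def by auto
  obtain p :: "'a \<Rightarrow> nat" where p: "\<forall>x\<in>V. \<forall>y\<in>V. E x y \<longleftrightarrow> p x \<noteq> p y"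
    using cm unfolding complete_multipartite_def by blast
  have max: "count_equipartite q r t V \<le> count_equipartite p r t V" for q
    by (rule count_equipartite_le_of_extremal[OF t0 E cV p ext])
  have "0 < count_equipartite (\<lambda>x. x mod r) r t {0..<n}"
    using count_equipartite_turan_pos[OF t0 n] r by simp
  also have "\<dots> = ind_count (Kpart_V r t) (Kpart_E r t) {0..<n} (turan_E r n)"
    by (rule ind_count_Kpart_eq_count_equipartite[OF t0 _ turan_E_iff, symmetric]) simp
  also have "\<dots> \<le> ind_max (Kpart_V r t) (Kpart_E r t) n"
    by (rule ind_count_le_ind_max[OF simple_graph_turan_E]) simp
  also have "\<dots> = count_equipartite p r t V"
    using ext ind_count_Kpart_eq_count_equipartite[OF t0 V p] by simp
  finally have pos: "0 < count_equipartite p r t V" .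
  then obtain S where S: "S \<subseteq> V" "equipartite p r t S"
    using count_equipartite_pos_iff[OF V] by blast
  then have "r \<le> card (p ` V)" "V \<noteq> {}"
    using V r unfolding equipartite_def by (auto intro: card_mono)
  then show ?thesis
    using balanced_multipartite_graph_iso_turan[OF V cV _ p extremal_labelling_balanced[OF t r V max pos]]
    by blast
qed

theorem theorem5p3:
  fixes r t n :: nat
  assumes "r \<ge> 2" and "t \<ge> 2" and "n \<ge> r * t"
  shows "(\<forall>(V :: 'a set) E. simple_graph V E \<and> card V = n \<and> complete_multipartite V E
            \<and> ind_count (Kpart_V r t) (Kpart_E r t) V E = ind_max (Kpart_V r t) (Kpart_E r t) n
          \<longrightarrow> (\<exists>k\<ge>r. graph_iso V E {0..<n} (turan_E k n)))
       \<and> (\<exists>k. ind_count (Kpart_V r t) (Kpart_E r t) {0..<n} (turan_E k n)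
              = ind_max (Kpart_V r t) (Kpart_E r t) n)"
proof (intro conjI allI impI)
  fix V :: "'a set" and E
  assume "simple_graph V E \<and> card V = n \<and> complete_multipartite V E
    \<and> ind_count (Kpart_V r t) (Kpart_E r t) V E = ind_max (Kpart_V r t) (Kpart_E r t) n"
  then show "\<exists>k\<ge>r. graph_iso V E {0..<n} (turan_E k n)"
    using extremal_complete_multipartite_turan[OF assms] by blast
next
  obtain E0 where "simple_graph {0..<n} E0"
    "ind_count (Kpart_V r t) (Kpart_E r t) {0..<n} E0 = ind_max (Kpart_V r t) (Kpart_E r t) n"
    using ind_max_attained by blast
  then obtain E where "ind_maximal (Kpart_V r t) (Kpart_E r t) {0..<n} E" "complete_multipartite {0..<n} E"
    using ind_maximal_complete_multipartite_exists[OF complete_multipartite_Kpart] ind_maximal_iff_ind_max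
    by blast
  then have E: "simple_graph {0..<n} E" "complete_multipartite {0..<n} E"
    "ind_count (Kpart_V r t) (Kpart_E r t) {0..<n} E = ind_max (Kpart_V r t) (Kpart_E r t) n"
    using ind_maximal_iff_ind_max by blast+
  then obtain k where "graph_iso {0..<n} E {0..<n} (turan_E k n)"
    using extremal_complete_multipartite_turan[OF assms E(1) _ E(2,3)] by auto
  then show "\<exists>k. ind_count (Kpart_V r t) (Kpart_E r t) {0..<n} (turan_E k n)
      = ind_max (Kpart_V r t) (Kpart_E r t) n"
    using ind_count_graph_iso E(3) by metis
qed

end
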